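(* Let $k\ge 3$ and let $D$ be a digraph on $n$ vertices with $\delta^0(D)\ge\lceil (n+k)/2\rceil-1$. Let $S=(s_1,\dots,s_k)$ be a sequence of distinct vertices of $D$, let $C$ be a longest $S$-cycle in $D$, suppose $C$ is not Hamiltonian, and let $H$ be the subdigraph of $D$ induced by $V(D)\setminus V(C)$. Let $F$ be the set of vertices of $C$ which receive an edge from some vertex of $H$, and $T$ the set of vertices of $C$ which send an edge to some vertex of $H$. Suppose $H$ contains a vertex $v$ with $d^-_H(v)+d^+_H(v)\le |H|+k-1$, and suppose $x_1,x_2\in T$ and $y_1,y_2\in F$ are distinct vertices on $C$. Then $x_1v, vy_1\in E(D)$ or $x_2v, vy_2\in E(D)$ (or both).
   Context: Digraphs have no loops and at most one edge in each direction between any two vertices; paths and cycles are directed. $\delta^0(D)=\min\{\delta^+(D),\delta^-(D)\}$. An $S$-cycle is a directed cycle in $D$ encountering $s_1,\dots,s_k$ in this order. $d^\pm_H(v)$ denotes the out/indegree of $v$ within $H$. *)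

theory Defs
  imports Complex_Main "HOL-Library.Sublist"
begin

text \<open>A digraph: finite vertex set V and edge relation E (no loops, edges inside V).
  At most one edge in each direction is automatic for a relation.\<close>
definition digraph :: "'a set \<Rightarrow> ('a \<Rightarrow> 'a \<Rightarrow> bool) \<Rightarrow> bool" where
  "digraph V E \<longleftrightarrow> finite V \<and> (\<forall>u w. E u w \<longrightarrow> u \<in> V \<and> w \<in> V) \<and> (\<forall>u. \<not> E u u)"

definition outdeg :: "'a set \<Rightarrow> ('a \<Rightarrow> 'a \<Rightarrow> bool) \<Rightarrow> 'a \<Rightarrow> nat" where
  "outdeg V E v = card {w \<in> V. E v w}"

definition indeg :: "'a set \<Rightarrow> ('a \<Rightarrow> 'a \<Rightarrow> bool) \<Rightarrow> 'a \<Rightarrow> nat" where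
  "indeg V E v = card {w \<in> V. E w v}"

definition min_semideg :: "'a set \<Rightarrow> ('a \<Rightarrow> 'a \<Rightarrow> bool) \<Rightarrow> nat" where
  "min_semideg V E = Min ((\<lambda>v. min (outdeg V E v) (indeg V E v)) ` V)"

definition dcycle :: "'a set \<Rightarrow> ('a \<Rightarrow> 'a \<Rightarrow> bool) \<Rightarrow> 'a list \<Rightarrow> bool" where
  "dcycle V E C \<longleftrightarrow> length C \<ge> 2 \<and> distinct C \<and> set C \<subseteq> V \<and>
     (\<forall>i < length C. E (C ! i) (C ! ((i + 1) mod length C)))"

text \<open>An S-cycle: a directed cycle encountering s_1,...,s_k in this (cyclic) order.\<close>
definition S_cycle :: "'a set \<Rightarrow> ('a \<Rightarrow> 'a \<Rightarrow> bool) \<Rightarrow> 'a list \<Rightarrow> 'a list \<Rightarrow> bool" where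
  "S_cycle V E S C \<longleftrightarrow> dcycle V E C \<and> (\<exists>r. subseq S (rotate r C))"

end

theory Submission
  imports Defs
begin

text \<open>
  Since \<open>C\<close> is a longest \<open>S\<close>-cycle, no path of \<open>H\<close> can be spliced in between consecutive
  vertices \<open>c\<^sub>i, c\<^sub>i\<^sub>+\<^sub>1\<close> of \<open>C\<close>: if \<open>z\<close> reaches \<open>u\<close> in \<open>H\<close>, then \<open>c\<^sub>i z\<close> and \<open>u c\<^sub>i\<^sub>+\<^sub>1\<close> are
  never both edges. Counting with the semidegree bound, this first forces \<open>H\<close> to be strongly
  connected, and then leaves at most one index \<open>i\<close> for which neither \<open>c\<^sub>i v\<close> nor \<open>v c\<^sub>i\<^sub>+\<^sub>1\<close> is an
  edge. A failing pair \<open>(x, y) \<in> T \<times> F\<close> yields such an index with \<open>x = c\<^sub>i\<close> or \<open>y = c\<^sub>i\<^sub>+\<^sub>1\<close>, so two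
  failing pairs with \<open>x\<^sub>1 \<noteq> x\<^sub>2\<close>, \<open>y\<^sub>1 \<noteq> y\<^sub>2\<close> give an index with \<open>c\<^sub>i \<in> T\<close> and \<open>c\<^sub>i\<^sub>+\<^sub>1 \<in> F\<close>, which
  strong connectivity of \<open>H\<close> turns into a forbidden splice again.
\<close>

lemma dcycle_iff_successively:
  "dcycle V E C \<longleftrightarrow>
     2 \<le> length C \<and> distinct C \<and> set C \<subseteq> V \<and> successively E C \<and> E (last C) (hd C)"
proof
  assume "dcycle V E C"
  then have C: "2 \<le> length C" "distinct C" "set C \<subseteq> V"
    and step: "\<And>i. i < length C \<Longrightarrow> E (C ! i) (C ! ((i + 1) mod length C))"
    unfolding dcycle_def by auto
  have "successively E C"
    unfolding successively_conv_nth using step by (metis Suc_eq_plus1 Suc_lessD mod_less)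
  moreover have "0 < length C" using C(1) by linarith
  then have "E (C ! (length C - 1)) (C ! 0)"
    using step[of "length C - 1"] by simp
  then have "E (last C) (hd C)"
    using \<open>0 < length C\<close> by (simp add: last_conv_nth hd_conv_nth)
  ultimately show "2 \<le> length C \<and> distinct C \<and> set C \<subseteq> V \<and> successively E C \<and> E (last C) (hd C)"
    using C by simp
next
  assume C: "2 \<le> length C \<and> distinct C \<and> set C \<subseteq> V \<and> successively E C \<and> E (last C) (hd C)"
  have "E (C ! i) (C ! ((i + 1) mod length C))" if i: "i < length C" for i
  proof (cases "i + 1 < length C")
    case True
    then show ?thesis using C successively_nth[of E C i] by simp
  next
    case False
    then have "i = length C - 1" using i by simp
    moreover have "C \<noteq> []" using i by auto
    ultimately have "(i + 1) mod length C = 0" "C ! i = last C" "C ! 0 = hd C"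
      by (simp_all add: last_conv_nth hd_conv_nth)
    then show ?thesis using C by simp
  qed
  then show "dcycle V E C" unfolding dcycle_def using C by blast
qed

lemma dcycle_rotate:
  assumes "dcycle V E C"
  shows "dcycle V E (rotate r C)"
  unfolding dcycle_def
proof (intro conjI allI impI)
  from assms have C: "2 \<le> length C" "distinct C" "set C \<subseteq> V"
    and step: "\<And>i. i < length C \<Longrightarrow> E (C ! i) (C ! ((i + 1) mod length C))"
    unfolding dcycle_def by auto
  show "2 \<le> length (rotate r C)" "distinct (rotate r C)" "set (rotate r C) \<subseteq> V"
    using C by auto
  fix i assume "i < length (rotate r C)"
  then have i: "i < length C" by simp
  let ?m = "length C"
  have "(r + (i + 1) mod ?m) mod ?m = ((r + i) mod ?m + 1) mod ?m"
    by (metis add.assoc mod_add_left_eq mod_add_right_eq)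
  moreover have "(r + i) mod ?m < ?m" "(i + 1) mod ?m < ?m"
    using C(1) by (auto intro: mod_less_divisor)
  ultimately show "E (rotate r C ! i) (rotate r C ! ((i + 1) mod length (rotate r C)))"
    using step[of "(r + i) mod ?m"] i by (simp add: nth_rotate)
qed

lemma dcycle_splice:
  assumes cycle: "dcycle V E C" and i: "i < length C"
    and P: "P \<noteq> []" "distinct P" "set P \<subseteq> V - set C" "successively E P"
    and into: "E (C ! i) (hd P)" and out: "E (last P) (C ! ((i + 1) mod length C))"
  shows "dcycle V E (take (i + 1) C @ P @ drop (i + 1) C)"
proof -
  let ?A = "take (i + 1) C" and ?B = "drop (i + 1) C"
  from cycle have C: "2 \<le> length C" "distinct C" "set C \<subseteq> V" "successively E C" "E (last C) (hd C)"
    unfolding dcycle_iff_successively by auto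
  have split: "C = ?A @ ?B" by simp
  have A: "?A \<noteq> []" "last ?A = C ! i"
    using i by (auto simp: take_Suc_conv_app_nth)
  then have "hd ?A = hd C" by (metis split hd_append2)
  have "successively E ?A" "successively E ?B"
    using C(4) split successively_append_iff by metis+
  moreover have "E (last P) (hd ?B)" if "?B \<noteq> []"
    using out that by (simp add: hd_drop_conv_nth)
  ultimately have "successively E (?A @ P @ ?B)"
    using A P(1,4) into by (auto simp: successively_append_iff)
  moreover have "E (last (?A @ P @ ?B)) (hd (?A @ P @ ?B))"
  proof (cases "?B = []")
    case True
    then have "i + 1 = length C" using i by simp
    then have "?A @ P @ ?B = C @ P" "(i + 1) mod length C = 0" by simp_all
    moreover have "hd (C @ P) = C ! 0" using i by (cases C) auto
    ultimately show ?thesis using out P(1) by simp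
  next
    case False
    then have "last ?B = last C" by (metis split last_appendR)
    then show ?thesis using False A(1) \<open>hd ?A = hd C\<close> C(5) by simp
  qed
  moreover have "distinct (?A @ P @ ?B)"
  proof -
    have "distinct (?A @ ?B)" using C(2) by simp
    then have "distinct ?A" "distinct ?B" "set ?A \<inter> set ?B = {}"
      by (simp_all only: distinct_append)
    moreover have "set P \<inter> set C = {}" using P(3) by auto
    ultimately show ?thesis
      using P(2) set_take_subset[of "i + 1" C] set_drop_subset[of "i + 1" C] by auto
  qed
  moreover have "set (?A @ P @ ?B) \<subseteq> V"
    using C(3) P(3) set_take_subset[of "i + 1" C] set_drop_subset[of "i + 1" C] by auto
  ultimately show ?thesis
    unfolding dcycle_iff_successively using C(1) by simp
qed

lemma rtranclp_imp_distinct_path: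
  assumes "R\<^sup>*\<^sup>* a b"
  shows "\<exists>P. P \<noteq> [] \<and> hd P = a \<and> last P = b \<and> distinct P \<and> set P \<subseteq> {w. R\<^sup>*\<^sup>* a w}
             \<and> successively R P"
  using assms
proof (induction rule: rtranclp_induct)
  case base
  show ?case by (intro exI[of _ "[a]"]) auto
next
  case (step b c)
  then obtain P where P: "P \<noteq> []" "hd P = a" "last P = b" "distinct P"
      "set P \<subseteq> {w. R\<^sup>*\<^sup>* a w}" "successively R P"
    by blast
  show ?case
  proof (cases "c \<in> set P")
    case True
    then obtain xs ys where "P = (xs @ [c]) @ ys"
      by (metis split_list append_Cons append_Nil append.assoc)
    with P show ?thesis
      by (intro exI[of _ "xs @ [c]"]) (auto simp: successively_append_iff hd_append)
  next
    case False
    with P step show ?thesis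
      by (intro exI[of _ "P @ [c]"]) (auto simp: successively_append_iff)
  qed
qed

lemma card_set_filter_eq_card_indices:
  assumes "distinct C"
  shows "card {c \<in> set C. p c} = card {i. i < length C \<and> p (C ! i)}"
  using distinct_length_filter[OF assms, of p] length_filter_conv_card[of p C]
  by (simp add: Collect_conj_eq Int_commute)

lemma exists_succ_mod_eq:
  assumes "0 < (m::nat)" "j < m"
  shows "\<exists>i < m. (i + 1) mod m = j"
proof -
  define i where "i = (if j = 0 then m - 1 else j - 1)"
  have "i < m" "(i + 1) mod m = j" using assms unfolding i_def by auto
  then show ?thesis by blast
qed

lemma card_indices_succ_mod:
  assumes "0 < (m::nat)"
  shows "card {i. i < m \<and> p ((i + 1) mod m)} = card {i. i < m \<and> p i}"
proof -
  let ?succ = "\<lambda>i. (i + 1) mod m" and ?A = "{i. i < m \<and> p ((i + 1) mod m)}"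
  have succ: "?succ i = (if i + 1 = m then 0 else i + 1)" if "i < m" for i
    using that by auto
  have inj: "inj_on ?succ ?A"
  proof (rule inj_onI)
    fix x y assume "x \<in> ?A" "y \<in> ?A" and "?succ x = ?succ y"
    then show "x = y" using succ[of x] succ[of y] by (auto split: if_splits)
  qed
  have image: "?succ ` ?A = {i. i < m \<and> p i}"
  proof
    show "?succ ` ?A \<subseteq> {i. i < m \<and> p i}" using assms by auto
  next
    show "{i. i < m \<and> p i} \<subseteq> ?succ ` ?A"
    proof
      fix j assume j: "j \<in> {i. i < m \<and> p i}"
      then obtain i where "i < m" "?succ i = j"
        using exists_succ_mod_eq[OF assms] by blast
      with j show "j \<in> ?succ ` ?A" by force
    qed
  qed
  show ?thesis using card_image[OF inj] unfolding image by (rule sym)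
qed

lemma min_semideg_le:
  assumes "digraph V E" and "w \<in> V"
  shows "min_semideg V E \<le> indeg V E w" and "min_semideg V E \<le> outdeg V E w"
proof -
  have "min_semideg V E \<le> min (outdeg V E w) (indeg V E w)"
    unfolding min_semideg_def using assms by (intro Min_le) (auto simp: digraph_def)
  then show "min_semideg V E \<le> indeg V E w" and "min_semideg V E \<le> outdeg V E w"
    by simp_all
qed

text \<open>\<open>S_cycle\<close> allows any rotation of the cycle; the locale fixes one in which \<open>S\<close> is a
  subsequence, so that splicing a path into \<open>C\<close> keeps \<open>S\<close> in order.\<close>

locale longest_S_cycle =
  fixes V :: "'a set" and E :: "'a \<Rightarrow> 'a \<Rightarrow> bool" and S C :: "'a list"
  assumes digraph: "digraph V E" and cycle: "dcycle V E C" and S_subseq: "subseq S C"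
    and longest: "\<forall>C'. S_cycle V E S C' \<longrightarrow> length C' \<le> length C"
begin

abbreviation "H \<equiv> V - set C"
abbreviation "m \<equiv> length C"
abbreviation "succ i \<equiv> (i + 1) mod m"

definition E_H :: "'a \<Rightarrow> 'a \<Rightarrow> bool" where
  "E_H a b \<longleftrightarrow> E a b \<and> a \<in> H \<and> b \<in> H"

lemma finite_V: "finite V" and no_loop: "\<not> E u u"
  using digraph unfolding digraph_def by auto

lemma distinct_C: "distinct C" and set_C_subset: "set C \<subseteq> V" and length_C_pos: "0 < m"
  using cycle unfolding dcycle_def by auto

lemma E_H_reachable_in_H: "E_H\<^sup>*\<^sup>* a b \<Longrightarrow> a \<in> H \<Longrightarrow> b \<in> H"
  by (induction rule: rtranclp_induct) (auto simp: E_H_def)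

lemma no_splice:
  assumes i: "i < m" and P: "P \<noteq> []" "distinct P" "set P \<subseteq> H" "successively E P"
    and into: "E (C ! i) (hd P)" and out: "E (last P) (C ! succ i)"
  shows False
proof -
  let ?C' = "take (i + 1) C @ P @ drop (i + 1) C"
  have "subseq (take (i + 1) C @ drop (i + 1) C) ?C'"
    by (simp only: subseq_append' subseq_drop_many)
  then have "subseq S ?C'"
    using S_subseq subseq_order.order_trans by auto
  moreover have "dcycle V E ?C'"
    using dcycle_splice[OF cycle i P into out] .
  ultimately have "S_cycle V E S ?C'"
    unfolding S_cycle_def by (metis rotate0 id_apply)
  with longest have "length ?C' \<le> m" by blast
  with i P(1) show False by simp
qed

lemma no_H_path_splice:
  assumes "E_H\<^sup>*\<^sup>* z u" "z \<in> H" "i < m" "E (C ! i) z" "E u (C ! succ i)"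
  shows False
proof -
  obtain P where P: "P \<noteq> []" "hd P = z" "last P = u" "distinct P"
      "set P \<subseteq> {w. E_H\<^sup>*\<^sup>* z w}" "successively E_H P"
    using rtranclp_imp_distinct_path[OF assms(1)] by blast
  have "set P \<subseteq> H" using P(5) E_H_reachable_in_H assms(2) by blast
  moreover have "successively E P"
    using P(6) by (rule successively_mono) (simp add: E_H_def)
  ultimately show False
    using no_splice[OF assms(3) P(1,4)] P(2,3) assms(4,5) by blast
qed

lemma card_C_in_eq: "card {c \<in> set C. E c z} = card {i. i < m \<and> E (C ! i) z}"
  by (rule card_set_filter_eq_card_indices[OF distinct_C])

lemma card_C_out_eq: "card {c \<in> set C. E u c} = card {i. i < m \<and> E u (C ! succ i)}"
  using card_set_filter_eq_card_indices[OF distinct_C, of "E u"]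
    card_indices_succ_mod[OF length_C_pos, of "\<lambda>j. E u (C ! j)"]
  by simp

lemma card_C_in_plus_card_C_out_le:
  assumes "E_H\<^sup>*\<^sup>* z u" "z \<in> H"
  shows "card {c \<in> set C. E c z} + card {c \<in> set C. E u c} \<le> m"
proof -
  let ?A = "{i. i < m \<and> E (C ! i) z}" and ?B = "{i. i < m \<and> E u (C ! succ i)}"
  have "?A \<inter> ?B = {}" using no_H_path_splice[OF assms] by blast
  then have "card ?A + card ?B = card (?A \<union> ?B)"
    by (simp add: card_Un_disjoint)
  also have "\<dots> \<le> card {..<m}" by (intro card_mono) auto
  finally show ?thesis by (simp add: card_C_in_eq card_C_out_eq)
qed

lemma card_V: "card V = m + card H"
proof -
  have "card (set C) = m" using distinct_C by (rule distinct_card)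
  moreover have "card (set C) \<le> card V" using finite_V set_C_subset by (rule card_mono)
  ultimately show ?thesis using finite_V set_C_subset by (simp add: card_Diff_subset)
qed

lemma indeg_le_of_pred_closed:
  assumes Z: "Z \<subseteq> H" and closed: "\<And>a b. E_H a b \<Longrightarrow> b \<in> Z \<Longrightarrow> a \<in> Z" and z: "z \<in> Z"
  shows "indeg V E z \<le> card {c \<in> set C. E c z} + (card Z - 1)"
proof -
  have "finite Z" using Z finite_V finite_subset by blast
  have "{w \<in> V. E w z} \<subseteq> {c \<in> set C. E c z} \<union> (Z - {z})"
    using Z closed z no_loop by (auto simp: E_H_def)
  then have "indeg V E z \<le> card ({c \<in> set C. E c z} \<union> (Z - {z}))"
    unfolding indeg_def using \<open>finite Z\<close> by (intro card_mono) auto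
  also have "\<dots> \<le> card {c \<in> set C. E c z} + card (Z - {z})" by (rule card_Un_le)
  finally show ?thesis using \<open>finite Z\<close> z by simp
qed

lemma outdeg_le_of_succ_closed:
  assumes X: "X \<subseteq> H" and closed: "\<And>a b. E_H a b \<Longrightarrow> a \<in> X \<Longrightarrow> b \<in> X" and u: "u \<in> X"
  shows "outdeg V E u \<le> card {c \<in> set C. E u c} + (card X - 1)"
proof -
  have "finite X" using X finite_V finite_subset by blast
  have "{w \<in> V. E u w} \<subseteq> {c \<in> set C. E u c} \<union> (X - {u})"
    using X closed u no_loop by (auto simp: E_H_def)
  then have "outdeg V E u \<le> card ({c \<in> set C. E u c} \<union> (X - {u}))"
    unfolding outdeg_def using \<open>finite X\<close> by (intro card_mono) auto
  also have "\<dots> \<le> card {c \<in> set C. E u c} + card (X - {u})" by (rule card_Un_le)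
  finally show ?thesis using \<open>finite X\<close> u by simp
qed

lemma semideg_le_closed_sets:
  assumes Z: "Z \<subseteq> H" "\<And>a b. E_H a b \<Longrightarrow> b \<in> Z \<Longrightarrow> a \<in> Z" "z \<in> Z"
    and X: "X \<subseteq> H" "\<And>a b. E_H a b \<Longrightarrow> a \<in> X \<Longrightarrow> b \<in> X" "u \<in> X"
    and path: "E_H\<^sup>*\<^sup>* z u"
  shows "2 * min_semideg V E + 2 \<le> m + card Z + card X"
proof -
  have "z \<in> V" "u \<in> V" using Z(1,3) X(1,3) by auto
  then have "min_semideg V E \<le> card {c \<in> set C. E c z} + (card Z - 1)"
    and "min_semideg V E \<le> card {c \<in> set C. E u c} + (card X - 1)"
    using le_trans[OF min_semideg_le(1)[OF digraph] indeg_le_of_pred_closed[OF Z]]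
      le_trans[OF min_semideg_le(2)[OF digraph] outdeg_le_of_succ_closed[OF X]]
    by simp_all
  moreover have "card {c \<in> set C. E c z} + card {c \<in> set C. E u c} \<le> m"
    using card_C_in_plus_card_C_out_le[OF path] Z(1,3) by blast
  moreover have "finite Z" "finite X"
    using Z(1) X(1) finite_V by (auto intro: finite_subset)
  then have "0 < card Z" "0 < card X"
    using Z(3) X(3) card_gt_0_iff by blast+
  ultimately show ?thesis by linarith
qed

definition reach_from :: "'a \<Rightarrow> 'a set" where
  "reach_from w = {u \<in> H. E_H\<^sup>*\<^sup>* w u}"

definition reach_to :: "'a \<Rightarrow> 'a set" where
  "reach_to w = {u \<in> H. E_H\<^sup>*\<^sup>* u w}"

lemma reach_from_subset: "reach_from w \<subseteq> H" and reach_to_subset: "reach_to w \<subseteq> H"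
  unfolding reach_from_def reach_to_def by blast+

lemma reach_from_succ_closed:
  assumes "E_H a b" "a \<in> reach_from w"
  shows "b \<in> reach_from w"
proof -
  have "E_H\<^sup>*\<^sup>* w b"
    using assms rtranclp.rtrancl_into_rtrancl[of E_H w a b] unfolding reach_from_def by simp
  moreover have "b \<in> H" using assms(1) unfolding E_H_def by simp
  ultimately show ?thesis unfolding reach_from_def by simp
qed

lemma reach_to_pred_closed:
  assumes "E_H a b" "b \<in> reach_to w"
  shows "a \<in> reach_to w"
proof -
  have "E_H\<^sup>*\<^sup>* a w"
    using assms converse_rtranclp_into_rtranclp[of E_H a b w] unfolding reach_to_def by simp
  moreover have "a \<in> H" using assms(1) unfolding E_H_def by simp
  ultimately show ?thesis unfolding reach_to_def by simp
qed

lemma semideg_le_reach_sets: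
  assumes "z \<in> H" "u \<in> H" "E_H\<^sup>*\<^sup>* z u"
  shows "2 * min_semideg V E + 2 \<le> m + card (reach_to z) + card (reach_from u)"
proof (rule semideg_le_closed_sets[where z = z and u = u])
  show "reach_to z \<subseteq> H" "reach_from u \<subseteq> H"
    by (fact reach_to_subset reach_from_subset)+
  show "\<And>a b. E_H a b \<Longrightarrow> b \<in> reach_to z \<Longrightarrow> a \<in> reach_to z"
    by (rule reach_to_pred_closed)
  show "\<And>a b. E_H a b \<Longrightarrow> a \<in> reach_from u \<Longrightarrow> b \<in> reach_from u"
    by (rule reach_from_succ_closed)
  show "z \<in> reach_to z" "u \<in> reach_from u"
    using assms(1,2) unfolding reach_to_def reach_from_def by simp_all
qed (fact assms(3))

lemma card_reach_from_plus_card_reach_to_le: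
  assumes "\<not> E_H\<^sup>*\<^sup>* a b"
  shows "card (reach_from a) + card (reach_to b) \<le> card H"
proof -
  have "reach_from a \<inter> reach_to b = {}"
    using assms rtranclp_trans[of E_H a _ b] unfolding reach_from_def reach_to_def by blast
  moreover have "finite (reach_from a)" "finite (reach_to b)"
    using finite_subset[OF reach_from_subset] finite_subset[OF reach_to_subset] finite_V by simp_all
  ultimately have "card (reach_from a) + card (reach_to b) = card (reach_from a \<union> reach_to b)"
    by (simp add: card_Un_disjoint)
  also have "\<dots> \<le> card H"
    using reach_from_subset reach_to_subset finite_V by (intro card_mono) auto
  finally show ?thesis .
qed

lemma H_strongly_connected:
  assumes big: "m + card H < 2 * min_semideg V E + 2" and a: "a \<in> H" and b: "b \<in> H"
  shows "E_H\<^sup>*\<^sup>* a b"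
proof (rule ccontr)
  assume not_ab: "\<not> E_H\<^sup>*\<^sup>* a b"
  note ab = card_reach_from_plus_card_reach_to_le[OF not_ab]
  show False
  proof (cases "E_H\<^sup>*\<^sup>* b a")
    case True
    then show False using semideg_le_reach_sets[OF b a True] ab big by linarith
  next
    case False
    then show False
      using card_reach_from_plus_card_reach_to_le[OF False] ab big
        semideg_le_reach_sets[OF a a rtranclp.rtrancl_refl]
        semideg_le_reach_sets[OF b b rtranclp.rtrancl_refl]
      by linarith
  qed
qed

lemma indeg_eq: "indeg V E v = card {c \<in> set C. E c v} + card {u \<in> H. E u v}"
proof -
  have "{w \<in> V. E w v} = {c \<in> set C. E c v} \<union> {u \<in> H. E u v}"
    using set_C_subset by auto
  then show ?thesis
    unfolding indeg_def using finite_V by (simp add: card_Un_disjoint disjoint_iff)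
qed

lemma outdeg_eq: "outdeg V E v = card {c \<in> set C. E v c} + card {u \<in> H. E v u}"
proof -
  have "{w \<in> V. E v w} = {c \<in> set C. E v c} \<union> {u \<in> H. E v u}"
    using set_C_subset by auto
  then show ?thesis
    unfolding outdeg_def using finite_V by (simp add: card_Un_disjoint disjoint_iff)
qed

definition gaps :: "'a \<Rightarrow> nat set" where
  "gaps v = {i. i < m \<and> \<not> E (C ! i) v \<and> \<not> E v (C ! succ i)}"

lemma card_gaps_le_1:
  assumes big: "m + card H + k \<le> 2 * min_semideg V E + 2" and k: "1 \<le> k" and v: "v \<in> H"
    and vdeg: "card {u \<in> H. E u v} + card {u \<in> H. E v u} \<le> card H + k - 1"
  shows "card (gaps v) \<le> 1"
proof -
  let ?I = "{i. i < m \<and> E (C ! i) v}" and ?O = "{i. i < m \<and> E v (C ! succ i)}"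
  have partition: "?I \<union> ?O \<union> gaps v = {..<m}"
    unfolding gaps_def by auto
  have "?I \<inter> ?O = {}"
    using no_H_path_splice[OF rtranclp.rtrancl_refl v] by blast
  moreover have "(?I \<union> ?O) \<inter> gaps v = {}"
    unfolding gaps_def by auto
  moreover have "finite ?I" "finite ?O" "finite (gaps v)"
    unfolding gaps_def by simp_all
  ultimately have "card ?I + card ?O + card (gaps v) = card (?I \<union> ?O \<union> gaps v)"
    by (simp add: card_Un_disjoint)
  also have "\<dots> = m" unfolding partition by simp
  finally have "m = card ?I + card ?O + card (gaps v)" ..
  moreover have "min_semideg V E \<le> card ?I + card {u \<in> H. E u v}"
    and "min_semideg V E \<le> card ?O + card {u \<in> H. E v u}"
    using min_semideg_le[OF digraph, of v] v indeg_eq[of v] outdeg_eq[of v]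
    by (simp_all add: card_C_in_eq card_C_out_eq)
  ultimately show ?thesis using big k vdeg by linarith
qed

definition C_to_H :: "'a set" where
  "C_to_H = {x \<in> set C. \<exists>h \<in> H. E x h}"

definition C_from_H :: "'a set" where
  "C_from_H = {y \<in> set C. \<exists>h \<in> H. E h y}"

context
  assumes H_connected: "\<And>a b. a \<in> H \<Longrightarrow> b \<in> H \<Longrightarrow> E_H\<^sup>*\<^sup>* a b"
begin

lemma gap_at_tail:
  assumes v: "v \<in> H" and x: "x \<in> C_to_H" and "\<not> E x v"
  shows "\<exists>i \<in> gaps v. C ! i = x"
proof -
  obtain i where i: "i < m" "C ! i = x"
    using x unfolding C_to_H_def by (auto simp: in_set_conv_nth)
  obtain h where h: "h \<in> H" "E x h"
    using x unfolding C_to_H_def by blast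
  have "\<not> E v (C ! succ i)"
    using no_H_path_splice[OF H_connected[OF h(1) v] h(1) i(1)] h(2) i(2) by blast
  with i assms(3) show ?thesis unfolding gaps_def by blast
qed

lemma gap_at_head:
  assumes v: "v \<in> H" and y: "y \<in> C_from_H" and "\<not> E v y"
  shows "\<exists>i \<in> gaps v. C ! succ i = y"
proof -
  obtain j where j: "j < m" "C ! j = y"
    using y unfolding C_from_H_def by (auto simp: in_set_conv_nth)
  then obtain i where i: "i < m" "succ i = j"
    using exists_succ_mod_eq[OF length_C_pos] by blast
  obtain h where h: "h \<in> H" "E h y"
    using y unfolding C_from_H_def by blast
  have "\<not> E (C ! i) v"
    using no_H_path_splice[OF H_connected[OF v h(1)] v i(1)] h(2) i(2) j(2) by blast
  with i j assms(3) show ?thesis unfolding gaps_def by blast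
qed

lemma no_C_edge_from_C_to_H_to_C_from_H:
  assumes "i < m" "C ! i \<in> C_to_H" "C ! succ i \<in> C_from_H"
  shows False
proof -
  obtain h h' where h: "h \<in> H" "E (C ! i) h" and h': "h' \<in> H" "E h' (C ! succ i)"
    using assms(2,3) unfolding C_to_H_def C_from_H_def by blast
  show False using no_H_path_splice[OF H_connected[OF h(1) h'(1)] h(1) assms(1) h(2) h'(2)] .
qed

end

lemma pair_through_vertex:
  assumes big: "m + card H + k \<le> 2 * min_semideg V E + 2" and k: "1 \<le> k" and v: "v \<in> H"
    and vdeg: "card {u \<in> H. E u v} + card {u \<in> H. E v u} \<le> card H + k - 1"
    and x: "x1 \<in> C_to_H" "x2 \<in> C_to_H" "x1 \<noteq> x2"
    and y: "y1 \<in> C_from_H" "y2 \<in> C_from_H" "y1 \<noteq> y2"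
  shows "(E x1 v \<and> E v y1) \<or> (E x2 v \<and> E v y2)"
proof (rule ccontr)
  have connected: "\<And>a b. a \<in> H \<Longrightarrow> b \<in> H \<Longrightarrow> E_H\<^sup>*\<^sup>* a b"
    using H_strongly_connected big k by simp
  have fail: "\<exists>i \<in> gaps v. C ! i = x \<or> C ! succ i = y"
    if "x \<in> C_to_H" "y \<in> C_from_H" "\<not> (E x v \<and> E v y)" for x y
    using gap_at_tail[OF connected v] gap_at_head[OF connected v] that by blast
  assume "\<not> ?thesis"
  then obtain i j where i: "i \<in> gaps v" "C ! i = x1 \<or> C ! succ i = y1"
    and j: "j \<in> gaps v" "C ! j = x2 \<or> C ! succ j = y2"
    using fail x y by meson
  have "finite (gaps v)" unfolding gaps_def by simp
  then have "i = j"
    using card_gaps_le_1[OF big k v vdeg] i(1) j(1) by (auto simp: card_le_Suc0_iff_eq)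
  moreover have "i < m" using i(1) unfolding gaps_def by simp
  ultimately show False
    using i(2) j(2) x y no_C_edge_from_C_to_H_to_C_from_H[OF connected] by metis
qed

end

lemma le_double_of_ceiling_half_le:
  fixes a d :: nat
  assumes "\<lceil>real a / 2\<rceil> - 1 \<le> int d"
  shows "a \<le> 2 * d + 2"
proof -
  have "real a / 2 \<le> of_int \<lceil>real a / 2\<rceil>" by (rule le_of_int_ceiling)
  also have "\<dots> \<le> real d + 1" using assms by linarith
  finally show ?thesis by linarith
qed

theorem lemma10:
  fixes V :: "'a set" and E :: "'a \<Rightarrow> 'a \<Rightarrow> bool" and S C :: "'a list"
    and k :: nat and v x1 x2 y1 y2 :: 'a
  assumes D: "digraph V E"
    and k: "k \<ge> 3"
    and deg: "int (min_semideg V E) \<ge> \<lceil>(real (card V) + real k) / 2\<rceil> - 1"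
    and S: "length S = k" "distinct S" "set S \<subseteq> V"
    and C: "S_cycle V E S C"
    and longest: "\<forall>C'. S_cycle V E S C' \<longrightarrow> length C' \<le> length C"
    and nonham: "set C \<noteq> V"
    and v: "v \<in> V - set C"
    and vdeg: "card {u \<in> V - set C. E u v} + card {u \<in> V - set C. E v u}
                 \<le> card (V - set C) + k - 1"
    and T: "x1 \<in> {x \<in> set C. \<exists>h \<in> V - set C. E x h}"
           "x2 \<in> {x \<in> set C. \<exists>h \<in> V - set C. E x h}"
    and F: "y1 \<in> {y \<in> set C. \<exists>h \<in> V - set C. E h y}"
           "y2 \<in> {y \<in> set C. \<exists>h \<in> V - set C. E h y}"
    and dist: "distinct [x1, x2, y1, y2]"
  shows "(E x1 v \<and> E v y1) \<or> (E x2 v \<and> E v y2)"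
proof -
  obtain r where "dcycle V E C" and "subseq S (rotate r C)"
    using C unfolding S_cycle_def by blast
  then interpret longest_S_cycle V E S "rotate r C"
    using D longest by unfold_locales (simp_all add: dcycle_rotate)
  have "card V + k \<le> 2 * min_semideg V E + 2"
    using deg by (intro le_double_of_ceiling_half_le) simp
  then have "length C + card (V - set C) + k \<le> 2 * min_semideg V E + 2"
    using card_V by simp
  then show ?thesis
    using pair_through_vertex[of k v x1 x2 y1 y2] k v vdeg T F dist
    unfolding C_to_H_def C_from_H_def by simp
qed

end
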